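(* Let $s\ge2$ be an integer and $\psi_s(z):=z^{s-1}(z+s)-(s-1)^{s-1}$. Every complex root $\alpha$ of $\psi_s$ other than its unique negative real root satisfies $|\alpha|<s-1$.
   Context: The negative real root of $\psi_s$ is unique: it is $1-s$ when $s$ is odd and lies in $(-s-1,1-s)$ when $s$ is even. *)

theory Defs
  imports "HOL-Analysis.Analysis"
begin

definition psi :: "nat \<Rightarrow> complex \<Rightarrow> complex" where
  "psi s z = z ^ (s - 1) * (z + of_nat s) - (of_nat s - 1) ^ (s - 1)"

definition neg_root :: "nat \<Rightarrow> real" where
  "neg_root s = (THE r. r < 0 \<and> psi s (complex_of_real r) = 0)"

end

theory Submission
  imports Defs
begin

text \<open>Write \<open>s = n + 1\<close>, so that \<open>psi s z = 0\<close> reads \<open>z^n (z + n + 1) = n^n\<close>.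
Taking imaginary parts of \<open>|z^n|^2 (z + n + 1) = n^n conj (z^n)\<close> and using
\<open>|Im (z^n)| \<le> n |z|^(n-1) |Im z|\<close> shows that a non-real root satisfies \<open>|z| \<le> n\<close>;
and \<open>|z| = n\<close> forces \<open>|z + n + 1| = 1\<close>, which pins \<open>z\<close> down to \<open>-n\<close>.  Hence a root
with \<open>|z| \<ge> n\<close> is real, necessarily negative, and so it is the negative root, whose
uniqueness comes from the shape of \<open>t^n (n + 1 - t)\<close>: increasing on \<open>[0, n]\<close> and
decreasing on \<open>[n, \<infinity>)\<close>.\<close>

lemma abs_Im_power_le:
  fixes z :: complex
  shows "\<bar>Im (z ^ n)\<bar> \<le> real n * cmod z ^ (n - 1) * \<bar>Im z\<bar>"
proof (induction n)
  case 0
  then show ?case by simp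
next
  case (Suc n)
  have "\<bar>Re z * Im (z ^ n)\<bar> \<le> cmod z * (real n * cmod z ^ (n - 1) * \<bar>Im z\<bar>)"
    unfolding abs_mult by (rule mult_mono[OF abs_Re_le_cmod Suc.IH]) auto
  also have "\<dots> = real n * cmod z ^ n * \<bar>Im z\<bar>"
    by (cases n) auto
  finally have "\<bar>Re z * Im (z ^ n)\<bar> \<le> real n * cmod z ^ n * \<bar>Im z\<bar>" .
  moreover have "\<bar>Im z * Re (z ^ n)\<bar> \<le> \<bar>Im z\<bar> * cmod z ^ n"
    unfolding abs_mult by (metis abs_Re_le_cmod abs_ge_zero mult_left_mono norm_power)
  moreover have "Im (z ^ Suc n) = Re z * Im (z ^ n) + Im z * Re (z ^ n)"
    by (simp add: power_Suc)
  ultimately show ?case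
    by (simp add: algebra_simps)
qed

lemma psi_Suc_eq_0_iff:
  "psi (Suc n) z = 0 \<longleftrightarrow> z ^ n * (z + of_nat n + 1) = of_nat n ^ n"
  unfolding psi_def by (simp add: add_ac)

lemma psi_Suc_of_real_eq_0_iff:
  "psi (Suc n) (complex_of_real x) = 0 \<longleftrightarrow> x ^ n * (x + real n + 1) = real n ^ n"
proof -
  have "complex_of_real x ^ n * (complex_of_real x + of_nat n + 1)
      = complex_of_real (x ^ n * (x + real n + 1))"
    by simp
  moreover have "(of_nat n :: complex) ^ n = complex_of_real (real n ^ n)"
    by simp
  ultimately show ?thesis
    unfolding psi_Suc_eq_0_iff by (metis of_real_eq_iff)
qed

lemma root_Im_identity:
  fixes z :: complex
  assumes root: "z ^ n * (z + of_nat n + 1) = of_nat n ^ n"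
  shows "Im z * cmod z ^ (2 * n) = - (real n ^ n * Im (z ^ n))"
proof -
  have "(z + of_nat n + 1) * (z ^ n * cnj (z ^ n)) = of_nat n ^ n * cnj (z ^ n)"
    using root by (metis mult.assoc mult.commute)
  then have "(z + of_nat n + 1) * complex_of_real ((cmod (z ^ n))\<^sup>2) = of_nat n ^ n * cnj (z ^ n)"
    by (simp only: complex_norm_square[symmetric])
  then have "Im ((z + of_nat n + 1) * complex_of_real ((cmod (z ^ n))\<^sup>2))
      = Im (of_nat n ^ n * cnj (z ^ n))"
    by (rule arg_cong)
  then have "Im z * (cmod (z ^ n))\<^sup>2 = - (real n ^ n * Im (z ^ n))"
    by (simp add: Im_complex_of_real del: complex_cnj_power)
  then show ?thesis
    by (simp add: norm_power power_mult[symmetric] mult.commute)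
qed

lemma nonreal_root_norm_le:
  fixes z :: complex
  assumes "n \<ge> 1" and root: "z ^ n * (z + of_nat n + 1) = of_nat n ^ n"
    and nonreal: "Im z \<noteq> 0"
  shows "cmod z \<le> real n"
proof -
  define r where "r = cmod z"
  have "r > 0"
    using nonreal r_def by auto
  have "\<bar>Im z\<bar> * r ^ (2 * n) = real n ^ n * \<bar>Im (z ^ n)\<bar>"
    using arg_cong[OF root_Im_identity[OF root], of abs] by (simp add: abs_mult r_def)
  also have "\<dots> \<le> real n ^ n * (real n * r ^ (n - 1) * \<bar>Im z\<bar>)"
    using abs_Im_power_le[of z n] by (intro mult_left_mono) (auto simp: r_def)
  finally have "r ^ (2 * n) \<le> real n ^ (n + 1) * r ^ (n - 1)"
    using nonreal by (simp add: algebra_simps)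
  moreover have "2 * n = (n + 1) + (n - 1)"
    using \<open>n \<ge> 1\<close> by simp
  then have "r ^ (2 * n) = r ^ (n + 1) * r ^ (n - 1)"
    by (simp only: power_add)
  ultimately have "r ^ Suc n \<le> real n ^ Suc n"
    using \<open>r > 0\<close> by simp
  then show ?thesis
    unfolding r_def by (rule power_le_imp_le_base) simp
qed

lemma root_eq_neg_if_norm_eq:
  fixes z :: complex
  assumes root: "z ^ n * (z + of_nat n + 1) = of_nat n ^ n"
    and norm: "cmod z = real n"
  shows "z = - of_nat n"
proof -
  have "cmod (z + of_nat n + 1) * real n ^ n = real n ^ n"
    using arg_cong[OF root, of cmod] norm by (simp add: norm_mult norm_power)
  then have "cmod (z + of_nat n + 1) = 1"
    by auto
  then have "(Re z + real n + 1)\<^sup>2 + (Im z)\<^sup>2 = 1"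
    using cmod_power2[of "z + of_nat n + 1"] by simp
  moreover have "(Re z)\<^sup>2 + (Im z)\<^sup>2 = (real n)\<^sup>2"
    using norm cmod_power2[of z] by simp
  ultimately have "2 * (real n + 1) * (Re z + real n) = 0"
    by (simp add: power2_eq_square algebra_simps)
  then have "Re z = - real n"
    by simp
  moreover from this have "Im z = 0"
    using \<open>(Re z)\<^sup>2 + (Im z)\<^sup>2 = (real n)\<^sup>2\<close> by simp
  ultimately show ?thesis
    by (simp add: complex_eq_iff)
qed

lemma root_real_if_norm_ge:
  fixes z :: complex
  assumes "n \<ge> 1" and root: "z ^ n * (z + of_nat n + 1) = of_nat n ^ n"
    and "cmod z \<ge> real n"
  shows "Im z = 0"
proof (rule ccontr)
  assume "Im z \<noteq> 0"
  then have "cmod z = real n"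
    using nonreal_root_norm_le[OF \<open>n \<ge> 1\<close> root] \<open>cmod z \<ge> real n\<close> by simp
  then have "z = - of_nat n"
    using root_eq_neg_if_norm_eq[OF root] by simp
  with \<open>Im z \<noteq> 0\<close> show False
    by simp
qed

text \<open>For real \<open>t\<close>, \<open>psi (n + 1) (-t) = (-1)^n * peak_poly n t - n^n\<close>.\<close>

definition peak_poly :: "nat \<Rightarrow> real \<Rightarrow> real" where
  "peak_poly n t = t ^ n * (real n + 1 - t)"

lemma peak_poly_minus: "peak_poly n (- x) = (-1) ^ n * (x ^ n * (x + real n + 1))"
  unfolding peak_poly_def by (simp add: power_minus[of x])

lemma peak_poly_deriv:
  assumes "n \<ge> 1"
  shows "(peak_poly n has_real_derivative (real n + 1) * x ^ (n - 1) * (real n - x)) (at x)"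
proof -
  have "(peak_poly n has_real_derivative
      real n * x ^ (n - 1) * (real n + 1 - x) + x ^ n * (- 1)) (at x)"
    unfolding peak_poly_def by (auto intro!: derivative_eq_intros)
  moreover have "x ^ n = x * x ^ (n - 1)"
    using assms by (simp flip: power_Suc)
  ultimately show ?thesis
    by (simp add: algebra_simps)
qed

lemma continuous_on_peak_poly: "continuous_on A (peak_poly n)"
  unfolding peak_poly_def by (intro continuous_intros)

lemma peak_poly_increasing:
  assumes "n \<ge> 1" "0 \<le> a" "a < b" "b \<le> real n"
  shows "peak_poly n a < peak_poly n b"
proof (rule DERIV_pos_imp_increasing_open[OF \<open>a < b\<close> _ continuous_on_peak_poly])
  fix x assume "a < x" "x < b"
  then have "(real n + 1) * x ^ (n - 1) * (real n - x) > 0"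
    using assms by (intro mult_pos_pos) auto
  then show "\<exists>y. (peak_poly n has_real_derivative y) (at x) \<and> y > 0"
    using peak_poly_deriv[OF \<open>n \<ge> 1\<close>] by blast
qed

lemma peak_poly_decreasing:
  assumes "n \<ge> 1" "real n \<le> a" "a < b"
  shows "peak_poly n a > peak_poly n b"
proof (rule DERIV_neg_imp_decreasing_open[OF \<open>a < b\<close> _ continuous_on_peak_poly])
  fix x assume "a < x" "x < b"
  then have "(real n + 1) * x ^ (n - 1) * (real n - x) < 0"
    using assms by (intro mult_pos_neg) auto
  then show "\<exists>y. (peak_poly n has_real_derivative y) (at x) \<and> y < 0"
    using peak_poly_deriv[OF \<open>n \<ge> 1\<close>] by blast
qed

lemma peak_poly_eq_max_imp:
  assumes "n \<ge> 1" "0 \<le> t" "peak_poly n t = real n ^ n"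
  shows "t = real n"
proof -
  have max: "peak_poly n (real n) = real n ^ n"
    by (simp add: peak_poly_def)
  show ?thesis
  proof (cases t "real n" rule: linorder_cases)
    case less
    then show ?thesis
      using peak_poly_increasing[OF \<open>n \<ge> 1\<close> \<open>0 \<le> t\<close> less] max assms by simp
  next
    case greater
    then show ?thesis
      using peak_poly_decreasing[OF \<open>n \<ge> 1\<close> _ greater] max assms by simp
  qed
qed

lemma peak_poly_gt_if_eq_neg:
  assumes "n \<ge> 1" "t > 0" "peak_poly n t = - (real n ^ n)"
  shows "t > real n + 1"
proof (rule ccontr)
  assume "\<not> t > real n + 1"
  then have "peak_poly n t \<ge> 0"
    unfolding peak_poly_def using \<open>t > 0\<close> by simp
  moreover have "real n ^ n > 0"
    using \<open>n \<ge> 1\<close> by simp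
  ultimately show False
    using assms by simp
qed

lemma negative_real_root_unique:
  assumes "n \<ge> 1"
    and "x < 0" "x ^ n * (x + real n + 1) = real n ^ n"
    and "y < 0" "y ^ n * (y + real n + 1) = real n ^ n"
  shows "x = y"
proof (cases "even n")
  case True
  then have "peak_poly n (- x) = real n ^ n" "peak_poly n (- y) = real n ^ n"
    using assms by (simp_all add: peak_poly_minus)
  then show ?thesis
    using peak_poly_eq_max_imp[OF \<open>n \<ge> 1\<close>, of "- x"] peak_poly_eq_max_imp[OF \<open>n \<ge> 1\<close>, of "- y"]
      assms by simp
next
  case False
  then have px: "peak_poly n (- x) = - (real n ^ n)" and py: "peak_poly n (- y) = - (real n ^ n)"
    using assms by (simp_all add: peak_poly_minus)
  then have "- x > real n + 1" "- y > real n + 1"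
    using peak_poly_gt_if_eq_neg[OF \<open>n \<ge> 1\<close>] assms by simp_all
  then show ?thesis
  proof (cases "- x" "- y" rule: linorder_cases)
    case less
    then show ?thesis
      using peak_poly_decreasing[OF \<open>n \<ge> 1\<close> _ less] \<open>- x > real n + 1\<close> px py by simp
  next
    case greater
    then show ?thesis
      using peak_poly_decreasing[OF \<open>n \<ge> 1\<close> _ greater] \<open>- y > real n + 1\<close> px py by simp
  qed simp
qed

lemma neg_root_eqI:
  assumes "n \<ge> 1" "x < 0" "x ^ n * (x + real n + 1) = real n ^ n"
  shows "neg_root (Suc n) = x"
  unfolding neg_root_def psi_Suc_of_real_eq_0_iff
proof (rule the_equality)
  show "x < 0 \<and> x ^ n * (x + real n + 1) = real n ^ n"
    using assms by simp
next
  fix r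
  assume "r < 0 \<and> r ^ n * (r + real n + 1) = real n ^ n"
  then show "r = x"
    using negative_real_root_unique[OF \<open>n \<ge> 1\<close> _ _ \<open>x < 0\<close>] assms(3) by blast
qed

lemma real_root_neg_if_abs_ge:
  assumes "n \<ge> 1" "x ^ n * (x + real n + 1) = real n ^ n" "\<bar>x\<bar> \<ge> real n"
  shows "x < 0"
proof (rule ccontr)
  assume "\<not> x < 0"
  then have "x \<ge> real n"
    using assms by simp
  then have "x ^ n > 0"
    using \<open>n \<ge> 1\<close> by simp
  have "real n ^ n \<le> x ^ n"
    using \<open>x \<ge> real n\<close> by (simp add: power_mono)
  also have "x ^ n < x ^ n * (x + real n + 1)"
    using mult_strict_left_mono[of 1 "x + real n + 1" "x ^ n"] \<open>x \<ge> real n\<close> \<open>x ^ n > 0\<close> \<open>n \<ge> 1\<close>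
    by simp
  finally show False
    using assms by simp
qed

theorem mainTheorem15:
  fixes s :: nat and \<alpha> :: complex
  assumes "s \<ge> 2"
    and "psi s \<alpha> = 0"
    and "\<alpha> \<noteq> complex_of_real (neg_root s)"
  shows "cmod \<alpha> < real s - 1"
proof (rule ccontr)
  assume "\<not> cmod \<alpha> < real s - 1"
  define n where "n = s - 1"
  have s: "s = Suc n" and "n \<ge> 1"
    using \<open>s \<ge> 2\<close> by (simp_all add: n_def)
  with \<open>\<not> cmod \<alpha> < real s - 1\<close> have big: "cmod \<alpha> \<ge> real n"
    by simp
  have root: "\<alpha> ^ n * (\<alpha> + of_nat n + 1) = of_nat n ^ n"
    using \<open>psi s \<alpha> = 0\<close> unfolding s psi_Suc_eq_0_iff .
  define x where "x = Re \<alpha>"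
  have \<alpha>: "\<alpha> = complex_of_real x"
    using root_real_if_norm_ge[OF \<open>n \<ge> 1\<close> root big] by (simp add: x_def complex_eq_iff)
  have real_root: "x ^ n * (x + real n + 1) = real n ^ n"
    using \<open>psi s \<alpha> = 0\<close> unfolding s \<alpha> psi_Suc_of_real_eq_0_iff .
  have "x < 0"
    using real_root_neg_if_abs_ge[OF \<open>n \<ge> 1\<close> real_root] big \<alpha> by simp
  then have "neg_root s = x"
    unfolding s using neg_root_eqI[OF \<open>n \<ge> 1\<close> _ real_root] by simp
  with assms(3) \<alpha> show False
    by simp
qed

end
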